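(* Let $\mathcal{B}=\{x\in\mathbb{R}^d:\|x\|_2\le R\}$ and $g_1,\dots,g_m$ convex differentiable with $\mathcal{K}=\{x:g_i(x)\le0,\ i=1,\dots,m\}\subseteq\mathcal{B}$ nonempty. Let $f_1,\dots,f_T$ be convex differentiable, and assume for all $x,y\in\mathcal{B}$, $t$, $i$: $\|\nabla f_t(x)\|\le G$, $\|\nabla g_i(x)\|\le G$, $|g_i(x)|\le D$, and $f_t(x)-f_t(y)\le F$. Define $\mathcal{L}_t(x,\lambda)=f_t(x)+\sum_{i=1}^m\bigl(\lambda_ig_i(x)-\frac{\delta\eta}{2}\lambda_i^2\bigr)$ for $\lambda\in\mathbb{R}^m_+$, and run $x_1=0$, $\lambda_1=0$, $$x_{t+1}=\Pi_{\mathcal{B}}\bigl(x_t-\eta\nabla_x\mathcal{L}_t(x_t,\lambda_t)\bigr),\qquad \lambda_{t+1}=\Pi_{[0,\infty)^m}\bigl(\lambda_t+\eta\nabla_\lambda\mathcal{L}_t(x_t,\lambda_t)\bigr).$$ Let $a=R\sqrt{(m+1)G^2+2mD^2}$ and $\eta=R^2/(a\sqrt T)$; assume $T$ is large enough that $2\sqrt2\eta(m+1)\le1$, and choose $\delta>0$ with $\delta\ge(m+1)G^2+2m\delta^2\eta^2$. Then for $x_*=\arg\min_{x\in\mathcal{K}}\sum_{t=1}^Tf_t(x)$, $$\sum_{t=1}^T\bigl(f_t(x_t)-f_t(x_* )\bigr)\le a\sqrt T,\qquad \sum_{t=1}^Tg_i(x_t)\le\sqrt{2\bigl(FT+a\sqrt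 T\bigr)\sqrt T\Bigl(\frac{\delta R^2}{a}+\frac{ma}{R^2}\Bigr)}\quad(i=1,\dots,m).$$
   Context: $\Pi_S$ is Euclidean projection onto $S$; $x_t$ is chosen before $f_t$ is revealed. The iterates need not lie in $\mathcal{K}$; the second bound is the long-term violation of the constraints, which is $O(T^{3/4})$, while the regret is $O(\sqrt T)$. *)

theory Defs
  imports "HOL-Analysis.Analysis"
begin

end

theory Submission
  imports Defs "HOL-Analysis.Analysis"
begin

(*
  L_t is convex in x and concave in lam, so for any feasible u and any
  lam-comparator mu >= 0 the gap L_t(x_t, mu) - L_t(u, lam_t) is bounded by the inner
  product of the gradient with (x_t - u, mu - lam_t).  One projected step decreases the
  potential |x - u|^2 + |lam - mu|^2 by 2 eta times this gap, up to eta^2 times the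
  squared gradient; the regularisation term is chosen exactly so that the part of
  that squared gradient growing with lam_t cancels.  Summing over the rounds, the
  potential telescopes, giving one inequality for every mu >= 0 (cumulative_bound).
  Taking mu = 0 gives the regret bound; putting weight c on a single constraint and
  optimising the resulting quadratic in c gives the violation bound.
*)

text \<open>First-order characterisation of convexity: a convex function lies above its
  tangent planes.  Proved by restricting to the line through the two points.\<close>
lemma convex_gradient_inequality:
  fixes f :: "'a::real_inner \<Rightarrow> real"
  assumes convex: "convex_on UNIV f" and deriv: "(f has_derivative (\<lambda>h. v \<bullet> h)) (at y)"
  shows "v \<bullet> (u - y) \<le> f u - f y"
proof -
  define p where "p = (\<lambda>s::real. f (y + s *\<^sub>R (u - y)))"
  have "convex_on UNIV p"
  proof (rule convex_onI)
    fix s t w :: real assume "0 < w" "w < 1"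
    have "y + ((1 - w) * s + w * t) *\<^sub>R (u - y)
        = (1 - w) *\<^sub>R (y + s *\<^sub>R (u - y)) + w *\<^sub>R (y + t *\<^sub>R (u - y))"
      by (simp add: algebra_simps)
    then show "p ((1 - w) *\<^sub>R s + w *\<^sub>R t) \<le> (1 - w) * p s + w * p t"
      using convex_onD[OF convex, of w] \<open>0 < w\<close> \<open>w < 1\<close> by (simp add: p_def)
  qed simp
  moreover have "((\<lambda>s. y + s *\<^sub>R (u - y)) has_derivative (\<lambda>s. s *\<^sub>R (u - y))) (at 0)"
    by (auto intro!: derivative_eq_intros)
  from diff_chain_at[OF this, of f "\<lambda>h. v \<bullet> h"] deriv
  have "(p has_derivative (\<lambda>s. v \<bullet> (s *\<^sub>R (u - y)))) (at 0)"
    by (simp add: p_def o_def)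
  then have "(p has_field_derivative (v \<bullet> (u - y))) (at 0)"
    unfolding has_field_derivative_def by (simp add: mult.commute[of _ "v \<bullet> (u - y)"])
  ultimately show ?thesis
    using convex_on_imp_above_tangent[of UNIV p 0 1] by (simp add: p_def)
qed

text \<open>One projected gradient step towards a point \<open>u\<close> of a closed convex set: the
  squared distance to \<open>u\<close> drops by the linear term, up to the squared step length.
  (The projection is non-expansive and fixes \<open>u\<close>.)\<close>
lemma projected_step_distance:
  fixes S :: "'a::euclidean_space set"
  assumes "convex S" "closed S" "u \<in> S"
  shows "(norm (closest_point S (z - \<eta> *\<^sub>R v) - u))\<^sup>2
           \<le> (norm (z - u))\<^sup>2 - 2 * \<eta> * (v \<bullet> (z - u)) + \<eta>\<^sup>2 * (norm v)\<^sup>2"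
proof -
  have "norm (closest_point S (z - \<eta> *\<^sub>R v) - u) \<le> norm (z - \<eta> *\<^sub>R v - u)"
    using closest_point_lipschitz[OF assms(1,2), of "z - \<eta> *\<^sub>R v" u]
      closest_point_self[OF assms(3)] assms(3) by (auto simp: dist_norm)
  then have "(norm (closest_point S (z - \<eta> *\<^sub>R v) - u))\<^sup>2 \<le> (norm (z - \<eta> *\<^sub>R v - u))\<^sup>2"
    by (simp add: power_mono)
  also have "\<dots> = (norm (z - u))\<^sup>2 - 2 * \<eta> * (v \<bullet> (z - u)) + \<eta>\<^sup>2 * (norm v)\<^sup>2"
    unfolding power2_norm_eq_inner
    by (simp add: inner_diff_left inner_diff_right inner_commute algebra_simps power2_eq_square)
  finally show ?thesis .
qed

lemma projected_ascent_nonneg: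
  fixes l h \<mu> \<eta> :: real
  assumes "\<mu> \<ge> 0"
  shows "(closest_point {0..} (l + \<eta> * h) - \<mu>)\<^sup>2 \<le> (l - \<mu>)\<^sup>2 - 2 * \<eta> * (h * (\<mu> - l)) + \<eta>\<^sup>2 * h\<^sup>2"
  using projected_step_distance[of "{0::real..}" \<mu> l \<eta> "- h"] assms
  by (simp add: algebra_simps)

text \<open>A norm bound for \<open>v\<^sub>0 + \<Sum> w\<^sub>i v\<^sub>i\<close> with nonnegative weights, from the triangle
  inequality and the Cauchy--Schwarz bound \<open>(1 + \<Sum> w\<^sub>i)\<^sup>2 \<le> (m+1)(1 + \<Sum> w\<^sub>i\<^sup>2)\<close>.\<close>
lemma norm_nonneg_combination_squared:
  fixes v\<^sub>0 :: "'a::real_normed_vector" and v :: "nat \<Rightarrow> 'a" and w :: "nat \<Rightarrow> real"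
  assumes "norm v\<^sub>0 \<le> G" "\<forall>i\<in>{1..m}. norm (v i) \<le> G" "\<forall>i\<in>{1..m}. w i \<ge> 0"
  shows "(norm (v\<^sub>0 + (\<Sum>i=1..m. w i *\<^sub>R v i)))\<^sup>2 \<le> (real m + 1) * G\<^sup>2 * (1 + (\<Sum>i=1..m. (w i)\<^sup>2))"
proof -
  define w' where "w' i = (if i = 0 then 1 else w i)" for i
  have split: "(\<Sum>i=0..m. k (w' i)) = k 1 + (\<Sum>i=1..m. k (w i))" for k :: "real \<Rightarrow> real"
    by (simp add: sum.atLeast_Suc_atMost w'_def)
  have "norm (v\<^sub>0 + (\<Sum>i=1..m. w i *\<^sub>R v i)) \<le> norm v\<^sub>0 + (\<Sum>i=1..m. norm (w i *\<^sub>R v i))"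
    by (intro norm_triangle_le add_left_mono norm_sum)
  also have "\<dots> \<le> G + (\<Sum>i=1..m. w i * G)"
    using assms by (intro add_mono sum_mono) (auto intro: mult_left_mono)
  also have "\<dots> = G * (\<Sum>i=0..m. w' i)"
    using split[of "\<lambda>r. r"] by (simp add: sum_distrib_left algebra_simps)
  finally have "(norm (v\<^sub>0 + (\<Sum>i=1..m. w i *\<^sub>R v i)))\<^sup>2 \<le> G\<^sup>2 * (\<Sum>i=0..m. w' i)\<^sup>2"
    by (metis power_mono norm_ge_zero power_mult_distrib)
  also have "\<dots> \<le> G\<^sup>2 * ((\<Sum>i=0..m. (w' i)\<^sup>2) * (real m + 1))"
    using sum_squared_le_sum_of_squares[of w' "{0..m}"] by (intro mult_left_mono) (auto simp: add.commute)
  also have "\<dots> = (real m + 1) * G\<^sup>2 * (1 + (\<Sum>i=1..m. (w i)\<^sup>2))"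
    using split[of "\<lambda>r. r\<^sup>2"] by simp
  finally show ?thesis .
qed

lemma sum_chained_differences:
  fixes A B :: "nat \<Rightarrow> real"
  assumes "\<forall>t\<in>{1..<n}. B t = A (Suc t)" "n \<ge> 1"
  shows "(\<Sum>t=1..n. A t - B t) = A 1 - B n"
  using assms
proof (induction n)
  case (Suc n)
  show ?case
  proof (cases "n = 0")
    case False
    then have "(\<Sum>t=1..n. A t - B t) = A 1 - B n" and "B n = A (Suc n)"
      using Suc by auto
    then show ?thesis by simp
  qed simp
qed simp

text \<open>If \<open>c S - Q c\<^sup>2 \<le> M\<close> for every \<open>c \<ge> 0\<close>, then the choice \<open>c = S / (2Q)\<close>
  gives \<open>S \<le> \<surd>(4QM)\<close>.\<close>
lemma bound_from_quadratic:
  fixes S Q M :: real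
  assumes Q: "Q > 0" and quad: "\<And>c. c \<ge> 0 \<Longrightarrow> c * S - Q * c\<^sup>2 \<le> M"
  shows "S \<le> sqrt (4 * Q * M)"
proof (cases "S \<le> 0")
  case True
  moreover have "M \<ge> 0" using quad[of 0] by simp
  ultimately show ?thesis
    using Q by (meson order_trans real_sqrt_ge_zero mult_nonneg_nonneg less_imp_le zero_le_numeral)
next
  case False
  have "S\<^sup>2 / (4 * Q) = (S / (2 * Q)) * S - Q * (S / (2 * Q))\<^sup>2"
    using Q by (simp add: power2_eq_square field_simps)
  also have "\<dots> \<le> M" using quad[of "S / (2 * Q)"] False Q by simp
  finally have "S\<^sup>2 \<le> 4 * Q * M" using Q by (simp add: pos_divide_le_eq mult.commute)
  then show ?thesis using False by (simp add: real_le_rsqrt)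
qed

locale primal_dual_setting =
  fixes R G D \<delta> \<eta> :: real and m T :: nat
    and g :: "nat \<Rightarrow> 'a::euclidean_space \<Rightarrow> real" and dg :: "nat \<Rightarrow> 'a \<Rightarrow> 'a"
    and f :: "nat \<Rightarrow> 'a \<Rightarrow> real" and df :: "nat \<Rightarrow> 'a \<Rightarrow> 'a"
    and x :: "nat \<Rightarrow> 'a" and lam :: "nat \<Rightarrow> nat \<Rightarrow> real"
  assumes R_nonneg: "R \<ge> 0"
    and g_convex: "\<forall>i\<in>{1..m}. convex_on UNIV (g i)"
    and g_grad: "\<forall>i\<in>{1..m}. \<forall>y. (g i has_derivative (\<lambda>h. dg i y \<bullet> h)) (at y)"
    and f_convex: "\<forall>t\<in>{1..T}. convex_on UNIV (f t)"
    and f_grad: "\<forall>t\<in>{1..T}. \<forall>y. (f t has_derivative (\<lambda>h. df t y \<bullet> h)) (at y)"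
    and df_bound: "\<forall>t\<in>{1..T}. \<forall>y\<in>cball 0 R. norm (df t y) \<le> G"
    and dg_bound: "\<forall>i\<in>{1..m}. \<forall>y\<in>cball 0 R. norm (dg i y) \<le> G"
    and g_bound: "\<forall>i\<in>{1..m}. \<forall>y\<in>cball 0 R. \<bar>g i y\<bar> \<le> D"
    and x_init: "x 1 = 0"
    and lam_init: "\<forall>i\<in>{1..m}. lam 1 i = 0"
    and x_step: "\<forall>t\<in>{1..<T}. x (Suc t) = closest_point (cball 0 R)
        (x t - \<eta> *\<^sub>R (df t (x t) + (\<Sum>i=1..m. lam t i *\<^sub>R dg i (x t))))"
    and lam_step: "\<forall>t\<in>{1..<T}. \<forall>i\<in>{1..m}. lam (Suc t) i = closest_point {0..}
        (lam t i + \<eta> * (g i (x t) - \<delta> * \<eta> * lam t i))"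
begin

definition grad_x :: "nat \<Rightarrow> 'a" where
  "grad_x t = df t (x t) + (\<Sum>i=1..m. lam t i *\<^sub>R dg i (x t))"

definition grad_lam :: "nat \<Rightarrow> nat \<Rightarrow> real" where
  "grad_lam t i = g i (x t) - \<delta> * \<eta> * lam t i"

definition x_next :: "nat \<Rightarrow> 'a" where
  "x_next t = closest_point (cball 0 R) (x t - \<eta> *\<^sub>R grad_x t)"

definition lam_next :: "nat \<Rightarrow> nat \<Rightarrow> real" where
  "lam_next t i = closest_point {0..} (lam t i + \<eta> * grad_lam t i)"

definition lagrangian :: "nat \<Rightarrow> 'a \<Rightarrow> (nat \<Rightarrow> real) \<Rightarrow> real" where
  "lagrangian t y \<mu> = f t y + (\<Sum>i=1..m. \<mu> i * g i y - \<delta> * \<eta> / 2 * (\<mu> i)\<^sup>2)"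

definition potential :: "'a \<Rightarrow> (nat \<Rightarrow> real) \<Rightarrow> 'a \<Rightarrow> (nat \<Rightarrow> real) \<Rightarrow> real" where
  "potential u \<mu> y \<nu> = (norm (y - u))\<^sup>2 + (\<Sum>i=1..m. (\<nu> i - \<mu> i)\<^sup>2)"

definition gradient_budget :: real where
  "gradient_budget = (real m + 1) * G\<^sup>2 + 2 * real m * D\<^sup>2"

lemma gradient_budget_nonneg: "gradient_budget \<ge> 0"
  unfolding gradient_budget_def by simp

lemma iterate_in_ball: "t \<in> {1..T} \<Longrightarrow> x t \<in> cball 0 R"
proof (cases t)
  case (Suc s)
  moreover assume "t \<in> {1..T}"
  ultimately show ?thesis
    using x_step x_init R_nonneg closest_point_in_set[of "cball 0 R"]
    by (cases "s = 0") auto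
qed simp

lemma multiplier_nonneg: "t \<in> {1..T} \<Longrightarrow> i \<in> {1..m} \<Longrightarrow> lam t i \<ge> 0"
proof (cases t)
  case (Suc s)
  moreover assume "t \<in> {1..T}" "i \<in> {1..m}"
  ultimately show ?thesis
    using lam_step lam_init closest_point_in_set[of "{0::real..}"]
    by (cases "s = 0") auto
qed simp

text \<open>Degenerate case: if the gradient budget vanishes, all gradients are zero on the
  ball, so every iterate minimises every loss, and all constraints vanish there.\<close>
lemma zero_budget_bounds:
  assumes "gradient_budget = 0"
  shows "(\<Sum>t=1..T. f t (x t) - f t u) \<le> 0"
    and "j \<in> {1..m} \<Longrightarrow> (\<Sum>t=1..T. g j (x t)) \<le> 0"
proof -
  have G: "G = 0" and D: "m \<ge> 1 \<Longrightarrow> D = 0"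
    using assms unfolding gradient_budget_def by (auto simp: add_nonneg_eq_0_iff)
  show "(\<Sum>t=1..T. f t (x t) - f t u) \<le> 0"
  proof (rule sum_nonpos)
    fix t assume t: "t \<in> {1..T}"
    have "(f t has_derivative (\<lambda>h. df t (x t) \<bullet> h)) (at (x t))" using f_grad t by blast
    from convex_gradient_inequality[OF _ this] f_convex t
    have "df t (x t) \<bullet> (u - x t) \<le> f t u - f t (x t)" by blast
    moreover have "df t (x t) = 0" using df_bound t iterate_in_ball[OF t] G by auto
    ultimately show "f t (x t) - f t u \<le> 0" by simp
  qed
  show "(\<Sum>t=1..T. g j (x t)) \<le> 0" if "j \<in> {1..m}"
    using g_bound that D iterate_in_ball by (intro sum_nonpos) fastforce
qed

end

text \<open>The analysis needs positive parameters and the condition on \<open>\<delta>\<close> that lets the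
  regularisation absorb the multiplier-dependent part of the gradient norm.\<close>
locale primal_dual_analysis = primal_dual_setting +
  assumes eta_pos: "\<eta> > 0" and delta_pos: "\<delta> > 0"
    and delta_ge: "\<delta> \<ge> (real m + 1) * G\<^sup>2 + 2 * real m * \<delta>\<^sup>2 * \<eta>\<^sup>2"
begin

text \<open>Convexity in \<open>x\<close> and concavity in \<open>\<lambda>\<close>: the primal-dual gap is at most the inner
  product of the gradient with the displacement towards the comparator \<open>(u, \<mu>)\<close>.\<close>
lemma lagrangian_gap:
  assumes t: "t \<in> {1..T}"
  shows "lagrangian t (x t) \<mu> - lagrangian t u (lam t)
           \<le> grad_x t \<bullet> (x t - u) + (\<Sum>i=1..m. grad_lam t i * (\<mu> i - lam t i))"
proof -
  have f_part: "f t (x t) - f t u \<le> df t (x t) \<bullet> (x t - u)"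
    using convex_gradient_inequality[of "f t" "df t (x t)" "x t" u] f_convex f_grad t
    by (auto simp: inner_diff_right)
  have g_part: "(\<mu> i * g i (x t) - \<delta> * \<eta> / 2 * (\<mu> i)\<^sup>2) - (lam t i * g i u - \<delta> * \<eta> / 2 * (lam t i)\<^sup>2)
      \<le> lam t i * (dg i (x t) \<bullet> (x t - u)) + grad_lam t i * (\<mu> i - lam t i)"
    if i: "i \<in> {1..m}" for i
  proof -
    have "g i (x t) - g i u \<le> dg i (x t) \<bullet> (x t - u)"
      using convex_gradient_inequality[of "g i" "dg i (x t)" "x t" u] g_convex g_grad i
      by (auto simp: inner_diff_right)
    then have "lam t i * (g i (x t) - g i u) \<le> lam t i * (dg i (x t) \<bullet> (x t - u))"
      using multiplier_nonneg[OF t i] by (rule mult_left_mono)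
    moreover have "0 \<le> \<delta> * \<eta> / 2 * (\<mu> i - lam t i)\<^sup>2"
      using delta_pos eta_pos by simp
    ultimately show ?thesis
      unfolding grad_lam_def by (simp add: power2_eq_square algebra_simps)
  qed
  have "lagrangian t (x t) \<mu> - lagrangian t u (lam t) = f t (x t) - f t u
      + (\<Sum>i=1..m. (\<mu> i * g i (x t) - \<delta> * \<eta> / 2 * (\<mu> i)\<^sup>2) - (lam t i * g i u - \<delta> * \<eta> / 2 * (lam t i)\<^sup>2))"
    unfolding lagrangian_def by (simp add: sum_subtractf)
  also have "\<dots> \<le> df t (x t) \<bullet> (x t - u)
      + (\<Sum>i=1..m. lam t i * (dg i (x t) \<bullet> (x t - u)) + grad_lam t i * (\<mu> i - lam t i))"
    using f_part g_part by (intro add_mono sum_mono) auto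
  also have "\<dots> = grad_x t \<bullet> (x t - u) + (\<Sum>i=1..m. grad_lam t i * (\<mu> i - lam t i))"
    unfolding grad_x_def by (simp add: inner_add_left inner_sum_left sum.distrib)
  finally show ?thesis .
qed

lemma potential_step:
  assumes u: "u \<in> cball 0 R" and \<mu>: "\<forall>i\<in>{1..m}. \<mu> i \<ge> 0"
  shows "potential u \<mu> (x_next t) (lam_next t)
    \<le> potential u \<mu> (x t) (lam t)
       - 2 * \<eta> * (grad_x t \<bullet> (x t - u) + (\<Sum>i=1..m. grad_lam t i * (\<mu> i - lam t i)))
       + \<eta>\<^sup>2 * ((norm (grad_x t))\<^sup>2 + (\<Sum>i=1..m. (grad_lam t i)\<^sup>2))"
proof -
  have "(norm (x_next t - u))\<^sup>2
      \<le> (norm (x t - u))\<^sup>2 - 2 * \<eta> * (grad_x t \<bullet> (x t - u)) + \<eta>\<^sup>2 * (norm (grad_x t))\<^sup>2"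
    unfolding x_next_def using u by (intro projected_step_distance) auto
  moreover have "(\<Sum>i=1..m. (lam_next t i - \<mu> i)\<^sup>2)
      \<le> (\<Sum>i=1..m. (lam t i - \<mu> i)\<^sup>2 - 2 * \<eta> * (grad_lam t i * (\<mu> i - lam t i)) + \<eta>\<^sup>2 * (grad_lam t i)\<^sup>2)"
    unfolding lam_next_def using \<mu> by (intro sum_mono projected_ascent_nonneg) auto
  ultimately show ?thesis
    unfolding potential_def
    by (simp add: sum.distrib sum_subtractf sum_distrib_left algebra_simps)
qed

lemma gradient_norm_bound:
  assumes t: "t \<in> {1..T}"
  shows "(norm (grad_x t))\<^sup>2 + (\<Sum>i=1..m. (grad_lam t i)\<^sup>2)
           \<le> gradient_budget + \<delta> * (\<Sum>i=1..m. (lam t i)\<^sup>2)"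
proof -
  define q where "q = (\<Sum>i=1..m. (lam t i)\<^sup>2)"
  have q_nonneg: "q \<ge> 0" unfolding q_def by (simp add: sum_nonneg)
  have primal: "(norm (grad_x t))\<^sup>2 \<le> (real m + 1) * G\<^sup>2 * (1 + q)"
    unfolding grad_x_def q_def using iterate_in_ball[OF t] df_bound dg_bound t multiplier_nonneg[OF t]
    by (intro norm_nonneg_combination_squared) auto
  have "(grad_lam t i)\<^sup>2 \<le> 2 * D\<^sup>2 + 2 * \<delta>\<^sup>2 * \<eta>\<^sup>2 * (lam t i)\<^sup>2" if i: "i \<in> {1..m}" for i
  proof -
    have "(g i (x t))\<^sup>2 \<le> D\<^sup>2"
      using g_bound i iterate_in_ball[OF t] abs_le_square_iff[of "g i (x t)" D] by fastforce
    moreover have "(grad_lam t i)\<^sup>2 \<le> 2 * (g i (x t))\<^sup>2 + 2 * (\<delta> * \<eta> * lam t i)\<^sup>2"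
      unfolding grad_lam_def using zero_le_power2[of "g i (x t) + \<delta> * \<eta> * lam t i"]
      by (simp add: power2_eq_square algebra_simps)
    ultimately show ?thesis by (simp add: power_mult_distrib)
  qed
  then have "(\<Sum>i=1..m. (grad_lam t i)\<^sup>2) \<le> (\<Sum>i=1..m. 2 * D\<^sup>2 + 2 * \<delta>\<^sup>2 * \<eta>\<^sup>2 * (lam t i)\<^sup>2)"
    by (rule sum_mono)
  also have "\<dots> = 2 * real m * D\<^sup>2 + 2 * \<delta>\<^sup>2 * \<eta>\<^sup>2 * q"
    unfolding q_def by (simp add: sum.distrib sum_distrib_left)
  finally have dual: "(\<Sum>i=1..m. (grad_lam t i)\<^sup>2) \<le> 2 * real m * D\<^sup>2 + 2 * \<delta>\<^sup>2 * \<eta>\<^sup>2 * q" .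
  \<comment> \<open>The coefficient of \<open>q\<close> is at most \<open>\<delta>\<close>; for \<open>m = 0\<close> there are no multipliers.\<close>
  have "((real m + 1) * G\<^sup>2 + 2 * \<delta>\<^sup>2 * \<eta>\<^sup>2) * q \<le> \<delta> * q"
  proof (cases "m = 0")
    case False
    then have "2 * \<delta>\<^sup>2 * \<eta>\<^sup>2 \<le> 2 * real m * \<delta>\<^sup>2 * \<eta>\<^sup>2"
      using mult_right_mono[of 1 "real m" "\<delta>\<^sup>2 * \<eta>\<^sup>2"] by simp
    then show ?thesis using delta_ge q_nonneg by (intro mult_right_mono) auto
  qed (simp add: q_def)
  then show ?thesis
    using primal dual unfolding gradient_budget_def q_def[symmetric] by (simp add: algebra_simps)
qed

lemma lagrangian_at_feasible:
  assumes t: "t \<in> {1..T}" and u: "\<forall>i\<in>{1..m}. g i u \<le> 0"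
  shows "lagrangian t u (lam t) \<le> f t u - \<delta> * \<eta> / 2 * (\<Sum>i=1..m. (lam t i)\<^sup>2)"
proof -
  have "(\<Sum>i=1..m. lam t i * g i u) \<le> 0"
    using u multiplier_nonneg[OF t] by (intro sum_nonpos) (simp add: mult_nonneg_nonpos)
  then show ?thesis unfolding lagrangian_def by (simp add: sum_subtractf sum_distrib_left)
qed

text \<open>The regularisation \<open>-\<delta>\<eta>\<lambda>\<^sup>2/2\<close> cancels the part of the
  gradient norm that grows with \<open>\<lambda>\<^sub>t\<close>.\<close>
lemma one_round_bound:
  assumes t: "t \<in> {1..T}" and u: "u \<in> cball 0 R" "\<forall>i\<in>{1..m}. g i u \<le> 0"
    and \<mu>: "\<forall>i\<in>{1..m}. \<mu> i \<ge> 0"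
  shows "f t (x t) - f t u + (\<Sum>i=1..m. \<mu> i * g i (x t)) - \<delta> * \<eta> / 2 * (\<Sum>i=1..m. (\<mu> i)\<^sup>2)
    \<le> (potential u \<mu> (x t) (lam t) - potential u \<mu> (x_next t) (lam_next t)) / (2 * \<eta>)
       + \<eta> / 2 * gradient_budget"
proof -
  define gap where "gap = grad_x t \<bullet> (x t - u) + (\<Sum>i=1..m. grad_lam t i * (\<mu> i - lam t i))"
  define q where "q = (\<Sum>i=1..m. (lam t i)\<^sup>2)"
  define E where "E = f t (x t) - f t u + (\<Sum>i=1..m. \<mu> i * g i (x t)) - \<delta> * \<eta> / 2 * (\<Sum>i=1..m. (\<mu> i)\<^sup>2)"
  have "E = lagrangian t (x t) \<mu> - f t u"
    unfolding E_def lagrangian_def by (simp add: sum_subtractf sum_distrib_left)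
  then have "E \<le> gap - \<delta> * \<eta> / 2 * q"
    using lagrangian_gap[OF t, of \<mu> u] lagrangian_at_feasible[OF t u(2)]
    unfolding gap_def q_def by linarith
  then have "2 * \<eta> * E \<le> 2 * \<eta> * (gap - \<delta> * \<eta> / 2 * q)"
    using eta_pos by (intro mult_left_mono) auto
  then have "2 * \<eta> * E \<le> 2 * \<eta> * gap - \<eta>\<^sup>2 * \<delta> * q"
    by (simp add: power2_eq_square algebra_simps)
  moreover have "2 * \<eta> * gap \<le> potential u \<mu> (x t) (lam t) - potential u \<mu> (x_next t) (lam_next t)
      + \<eta>\<^sup>2 * (gradient_budget + \<delta> * q)"
    using potential_step[OF u(1) \<mu>, of t] gradient_norm_bound[OF t]
      mult_left_mono[OF gradient_norm_bound[OF t], of "\<eta>\<^sup>2"]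
    unfolding gap_def q_def by simp
  ultimately have "2 * \<eta> * E \<le> potential u \<mu> (x t) (lam t) - potential u \<mu> (x_next t) (lam_next t)
      + \<eta>\<^sup>2 * gradient_budget"
    by (simp add: algebra_simps)
  then show ?thesis
    unfolding E_def[symmetric] using eta_pos by (simp add: field_simps power2_eq_square)
qed


text \<open>Summing the one-round inequality over all rounds: the potential telescopes, and it
  starts at \<open>\<parallel>u\<parallel>\<^sup>2 + \<parallel>\<mu>\<parallel>\<^sup>2 \<le> R\<^sup>2 + \<parallel>\<mu>\<parallel>\<^sup>2\<close> because \<open>x\<^sub>1 = 0\<close> and \<open>\<lambda>\<^sub>1 = 0\<close>.\<close>
lemma cumulative_bound:
  assumes T: "T \<ge> 1" and u: "u \<in> cball 0 R" "\<forall>i\<in>{1..m}. g i u \<le> 0"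
    and \<mu>: "\<forall>i\<in>{1..m}. \<mu> i \<ge> 0"
  shows "(\<Sum>t=1..T. f t (x t) - f t u + (\<Sum>i=1..m. \<mu> i * g i (x t)))
    \<le> R\<^sup>2 / (2 * \<eta>) + real T * \<eta> / 2 * gradient_budget
       + (real T * \<delta> * \<eta> / 2 + 1 / (2 * \<eta>)) * (\<Sum>i=1..m. (\<mu> i)\<^sup>2)"
proof -
  define \<Phi> where "\<Phi> t = potential u \<mu> (x t) (lam t)" for t
  define \<Phi>' where "\<Phi>' t = potential u \<mu> (x_next t) (lam_next t)" for t
  define M where "M = (\<Sum>i=1..m. (\<mu> i)\<^sup>2)"
  have chain: "\<forall>t\<in>{1..<T}. \<Phi>' t = \<Phi> (Suc t)"
    using x_step lam_step
    unfolding \<Phi>_def \<Phi>'_def potential_def x_next_def lam_next_def grad_x_def grad_lam_def by simp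
  have start: "\<Phi> 1 - \<Phi>' T \<le> R\<^sup>2 + M"
  proof -
    have "\<Phi> 1 = (norm u)\<^sup>2 + M" unfolding \<Phi>_def potential_def M_def using x_init lam_init by simp
    moreover have "(norm u)\<^sup>2 \<le> R\<^sup>2" using u(1) by (simp add: power_mono)
    moreover have "\<Phi>' T \<ge> 0" unfolding \<Phi>'_def potential_def by (simp add: sum_nonneg)
    ultimately show ?thesis by linarith
  qed
  have "(\<Sum>t=1..T. f t (x t) - f t u + (\<Sum>i=1..m. \<mu> i * g i (x t)) - \<delta> * \<eta> / 2 * M)
      \<le> (\<Sum>t=1..T. (\<Phi> t - \<Phi>' t) / (2 * \<eta>) + \<eta> / 2 * gradient_budget)"
    using one_round_bound[OF _ u \<mu>] unfolding \<Phi>_def \<Phi>'_def M_def by (intro sum_mono) auto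
  also have "\<dots> = (\<Phi> 1 - \<Phi>' T) / (2 * \<eta>) + real T * (\<eta> / 2 * gradient_budget)"
    using sum_chained_differences[OF chain T] by (simp add: sum.distrib flip: sum_divide_distrib)
  also have "\<dots> \<le> (R\<^sup>2 + M) / (2 * \<eta>) + real T * (\<eta> / 2 * gradient_budget)"
    using start eta_pos by (simp add: divide_right_mono)
  finally show ?thesis
    unfolding M_def[symmetric] by (simp add: sum_subtractf sum.distrib add_divide_distrib algebra_simps)
qed

text \<open>Regret against any feasible point (take \<open>\<mu> = 0\<close>).\<close>
lemma regret_bound:
  assumes "T \<ge> 1" "u \<in> cball 0 R" "\<forall>i\<in>{1..m}. g i u \<le> 0"
  shows "(\<Sum>t=1..T. f t (x t) - f t u) \<le> R\<^sup>2 / (2 * \<eta>) + real T * \<eta> / 2 * gradient_budget"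
  using cumulative_bound[OF assms, of "\<lambda>_. 0"] by simp

text \<open>Long-term constraint violation: put all the dual weight \<open>c\<close> on constraint \<open>j\<close>,
  use that the regret is at least \<open>-F T\<close>, and optimise over \<open>c\<close>.\<close>
lemma violation_bound:
  assumes T: "T \<ge> 1" and u: "u \<in> cball 0 R" "\<forall>i\<in>{1..m}. g i u \<le> 0"
    and F: "\<forall>t\<in>{1..T}. f t u - f t (x t) \<le> (F::real)" and j: "j \<in> {1..m}"
  shows "(\<Sum>t=1..T. g j (x t))
    \<le> sqrt ((2 * real T * \<delta> * \<eta> + 2 / \<eta>) * (F * real T + (R\<^sup>2 / (2 * \<eta>) + real T * \<eta> / 2 * gradient_budget)))"
proof -
  define Q where "Q = real T * \<delta> * \<eta> / 2 + 1 / (2 * \<eta>)"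
  have "(\<Sum>t=1..T. g j (x t)) \<le> sqrt (4 * Q * (F * real T + (R\<^sup>2 / (2 * \<eta>) + real T * \<eta> / 2 * gradient_budget)))"
  proof (rule bound_from_quadratic)
    show "Q > 0" unfolding Q_def using eta_pos delta_pos by (simp add: add_nonneg_pos)
    fix c :: real assume c: "c \<ge> 0"
    define \<mu> where "\<mu> i = (if i = j then c else 0)" for i
    have weight: "(\<Sum>i=1..m. \<mu> i * g i (x t)) = c * g j (x t)" for t
      using j by (simp add: \<mu>_def if_distrib[of "\<lambda>z. z * _"] cong: if_cong)
    have norm_sq: "(\<Sum>i=1..m. (\<mu> i)\<^sup>2) = c\<^sup>2"
      using j by (simp add: \<mu>_def if_distrib[of "\<lambda>z. z\<^sup>2"] cong: if_cong)
    have "- (F * real T) \<le> (\<Sum>t=1..T. f t (x t) - f t u)"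
      using sum_mono[of "{1..T}" "\<lambda>_. - F" "\<lambda>t. f t (x t) - f t u"] F
      by (force simp: mult.commute)
    moreover have "(\<Sum>t=1..T. f t (x t) - f t u) + c * (\<Sum>t=1..T. g j (x t))
        \<le> R\<^sup>2 / (2 * \<eta>) + real T * \<eta> / 2 * gradient_budget + Q * c\<^sup>2"
      using cumulative_bound[OF T u, of \<mu>] c
      unfolding weight norm_sq Q_def by (simp add: \<mu>_def sum.distrib sum_distrib_left)
    ultimately show "c * (\<Sum>t=1..T. g j (x t)) - Q * c\<^sup>2
        \<le> F * real T + (R\<^sup>2 / (2 * \<eta>) + real T * \<eta> / 2 * gradient_budget)"
      by linarith
  qed
  also have "4 * Q = 2 * real T * \<delta> * \<eta> + 2 / \<eta>" unfolding Q_def by (simp add: field_simps)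
  finally show ?thesis .
qed

end

lemma tuned_step_size:
  fixes R \<kappa> a \<eta> \<delta> :: real and n :: nat
  assumes R: "R > 0" and a: "a > 0" "a = R * sqrt \<kappa>" and n: "n \<ge> 1"
    and \<eta>: "\<eta> = R\<^sup>2 / (a * sqrt n)"
  shows "R\<^sup>2 / (2 * \<eta>) + real n * \<eta> / 2 * \<kappa> = a * sqrt n"
    and "2 * real n * \<delta> * \<eta> + 2 / \<eta> = 2 * sqrt n * (\<delta> * R\<^sup>2 / a + a / R\<^sup>2)"
proof -
  have s: "sqrt n > 0" "real n = (sqrt n)\<^sup>2" using n by auto
  have "\<kappa> > 0" using a R by (auto simp: zero_less_mult_iff)
  then have \<kappa>: "\<kappa> = a\<^sup>2 / R\<^sup>2" using a(2) R by (simp add: power_mult_distrib)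
  show "R\<^sup>2 / (2 * \<eta>) + real n * \<eta> / 2 * \<kappa> = a * sqrt n"
    unfolding \<eta> \<kappa> using R a(1) s by (simp add: field_simps power2_eq_square)
  show "2 * real n * \<delta> * \<eta> + 2 / \<eta> = 2 * sqrt n * (\<delta> * R\<^sup>2 / a + a / R\<^sup>2)"
    unfolding \<eta> using R a(1) s by (simp add: field_simps power2_eq_square)
qed

theorem mainTheorem11:
  fixes R G D F \<delta> a \<eta> :: real and m T :: nat
    and g :: "nat \<Rightarrow> 'a::euclidean_space \<Rightarrow> real" and dg :: "nat \<Rightarrow> 'a \<Rightarrow> 'a"
    and f :: "nat \<Rightarrow> 'a \<Rightarrow> real" and df :: "nat \<Rightarrow> 'a \<Rightarrow> 'a"
    and x :: "nat \<Rightarrow> 'a" and lam :: "nat \<Rightarrow> nat \<Rightarrow> real" and xs :: 'a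
  assumes R_pos: "R > 0" and T_pos: "T \<ge> 1"
    and g_convex: "\<forall>i\<in>{1..m}. convex_on UNIV (g i)"
    and g_grad: "\<forall>i\<in>{1..m}. \<forall>y. (g i has_derivative (\<lambda>h. dg i y \<bullet> h)) (at y)"
    and K_sub: "{y. \<forall>i\<in>{1..m}. g i y \<le> 0} \<subseteq> cball 0 R"
    and K_ne: "{y. \<forall>i\<in>{1..m}. g i y \<le> 0} \<noteq> {}"
    and f_convex: "\<forall>t\<in>{1..T}. convex_on UNIV (f t)"
    and f_grad: "\<forall>t\<in>{1..T}. \<forall>y. (f t has_derivative (\<lambda>h. df t y \<bullet> h)) (at y)"
    and df_bound: "\<forall>t\<in>{1..T}. \<forall>y\<in>cball 0 R. norm (df t y) \<le> G"
    and dg_bound: "\<forall>i\<in>{1..m}. \<forall>y\<in>cball 0 R. norm (dg i y) \<le> G"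
    and g_bound: "\<forall>i\<in>{1..m}. \<forall>y\<in>cball 0 R. \<bar>g i y\<bar> \<le> D"
    and f_range: "\<forall>t\<in>{1..T}. \<forall>y\<in>cball 0 R. \<forall>z\<in>cball 0 R. f t y - f t z \<le> F"
    and a_def: "a = R * sqrt ((real m + 1) * G\<^sup>2 + 2 * real m * D\<^sup>2)"
    and eta_def: "\<eta> = R\<^sup>2 / (a * sqrt (real T))"
    and T_large: "2 * sqrt 2 * \<eta> * (real m + 1) \<le> 1"
    and delta_pos: "\<delta> > 0"
    and delta_ge: "\<delta> \<ge> (real m + 1) * G\<^sup>2 + 2 * real m * \<delta>\<^sup>2 * \<eta>\<^sup>2"
    and x_init: "x 1 = 0"
    and lam_init: "\<forall>i\<in>{1..m}. lam 1 i = 0"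
    and x_step: "\<forall>t\<in>{1..<T}. x (Suc t) = closest_point (cball 0 R)
        (x t - \<eta> *\<^sub>R (df t (x t) + (\<Sum>i=1..m. lam t i *\<^sub>R dg i (x t))))"
    and lam_step: "\<forall>t\<in>{1..<T}. \<forall>i\<in>{1..m}. lam (Suc t) i = closest_point {0..}
        (lam t i + \<eta> * (g i (x t) - \<delta> * \<eta> * lam t i))"
    and xs_in: "xs \<in> {y. \<forall>i\<in>{1..m}. g i y \<le> 0}"
    and xs_min: "\<forall>y\<in>{y. \<forall>i\<in>{1..m}. g i y \<le> 0}. (\<Sum>t=1..T. f t xs) \<le> (\<Sum>t=1..T. f t y)"
  shows "(\<Sum>t=1..T. f t (x t) - f t xs) \<le> a * sqrt (real T) \<and>
    (\<forall>i\<in>{1..m}. (\<Sum>t=1..T. g i (x t)) \<le>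
       sqrt (2 * (F * real T + a * sqrt (real T)) * sqrt (real T)
             * (\<delta> * R\<^sup>2 / a + real m * a / R\<^sup>2)))"
proof -
  interpret primal_dual_setting R G D \<delta> \<eta> m T g dg f df x lam
    using R_pos g_convex g_grad f_convex f_grad df_bound dg_bound g_bound x_init lam_init x_step lam_step
    by unfold_locales auto
  have xs: "xs \<in> cball 0 R" "\<forall>i\<in>{1..m}. g i xs \<le> 0" using xs_in K_sub by auto
  have a_budget: "a = R * sqrt gradient_budget" using a_def by (simp add: gradient_budget_def)
  show ?thesis
  proof (cases "a = 0")
    case True
    then have "gradient_budget = 0" using a_budget R_pos by simp
    then show ?thesis using True zero_budget_bounds by simp
  next
    case False
    have a_pos: "a > 0" using a_budget R_pos False gradient_budget_nonneg by simp
    interpret primal_dual_analysis R G D \<delta> \<eta> m T g dg f df x lam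
      using eta_def a_pos R_pos T_pos delta_pos delta_ge by unfold_locales auto
    note tuned = tuned_step_size[OF R_pos a_pos a_budget T_pos eta_def]
    have F_nonneg: "F \<ge> 0" using f_range xs(1) T_pos by fastforce
    have "(\<Sum>t=1..T. g j (x t)) \<le> sqrt (2 * (F * real T + a * sqrt (real T)) * sqrt (real T)
             * (\<delta> * R\<^sup>2 / a + real m * a / R\<^sup>2))" if j: "j \<in> {1..m}" for j
    proof -
      have "(\<Sum>t=1..T. g j (x t)) \<le> sqrt (2 * sqrt (real T) * (\<delta> * R\<^sup>2 / a + a / R\<^sup>2)
          * (F * real T + a * sqrt (real T)))"
        using violation_bound[OF T_pos xs _ j, of F] f_range xs iterate_in_ball tuned by auto
      also have "\<dots> \<le> sqrt (2 * sqrt (real T) * (\<delta> * R\<^sup>2 / a + real m * a / R\<^sup>2)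
          * (F * real T + a * sqrt (real T)))"
      proof (intro real_sqrt_le_mono mult_right_mono mult_left_mono add_left_mono)
        show "a / R\<^sup>2 \<le> real m * a / R\<^sup>2" using j a_pos by (simp add: divide_right_mono)
        show "0 \<le> F * real T + a * sqrt (real T)" using F_nonneg a_pos by simp
      qed simp
      finally show ?thesis by (simp only: ac_simps)
    qed
    then show ?thesis using regret_bound[OF T_pos xs] tuned(1) by auto
  qed
qed

end
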